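(* Let $T,d\ge1$, $\gamma>0$, $\beta>0$, and for each $t\in\{1,\dots,T\}$ let $(x_{t1},y_{t1}),\dots,(x_{tm_t},y_{tm_t})\in\mathbb{R}^d\times\mathbb{R}$ be given, with $X_t=[x_{t1},\dots,x_{tm_t}]$. Let $l$ be a loss that is $c$-admissible with respect to the class of linear functions. Let $\sigma_{ti}$ ($t=1,\dots,T$, $i=1,\dots,m_t$) be independent Rademacher variables (uniform on $\{-1,1\}$), and define $$\mathfrak{R}_n(l\circ(A,a_0,U))=2E_\sigma\sup_{a_t,a_0,U}\sum_{t=1}^{T}\sum_{i=1}^{m_t}\sigma_{ti}\,l\big(y_{ti},\langle a_t+a_0,U^Tx_{ti}\rangle\big),$$ where the supremum is over $A=[a_1,\dots,a_T]\in\mathbb{R}^{d\times T}$, $a_0\in\mathbb{R}^d$ and $U\in\mathbb{R}^{d\times d}$ with $U^TU=I$, $\|A\|_{2,1}^2\le T/\gamma$ and $\|a_0\|_2^2\le1/\beta$. Then $$\mathfrak{R}_n(l\circ(A,a_0,U))\le 2c\left(\sqrt{\frac{T}{\gamma}}+\sqrt{\frac1\beta}\right)\sqrt{\sum_{t=1}^{T}m_tS(X_t)},$$ where $S(X_t)=\frac1{m_t}\sum_{i=1}^{m_t}\|x_{ti}\|_2^2$.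
   Context: For $A\in\mathbb{R}^{d\times T}$ with rows $a^1,\dots,a^d$, $\|A\|_{2,1}=\sum_{i=1}^d\|a^i\|_2$. A loss $l$ is $c$-admissible with respect to a hypothesis class $H$ if there is $c\ge0$ such that for all $h,h'\in H$ and all $(x,y)$, $|l(y,h(x))-l(y,h'(x))|\le c|h(x)-h'(x)|$. *)

theory Defs
  imports "HOL-Analysis.Analysis"
begin

definition admissible :: "real \<Rightarrow> (real \<Rightarrow> real \<Rightarrow> real) \<Rightarrow> ('a \<Rightarrow> real) set \<Rightarrow> bool" where
  "admissible c l H \<longleftrightarrow> c \<ge> 0 \<and>
     (\<forall>h\<in>H. \<forall>h'\<in>H. \<forall>x y. \<bar>l y (h x) - l y (h' x)\<bar> \<le> c * \<bar>h x - h' x\<bar>)"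

text \<open>(2,1)-norm of the d x T matrix A = [a_1,...,a_T] (columns A 1, ..., A T):
  sum over rows i of the Euclidean norm of the i-th row.\<close>
definition norm21 :: "nat \<Rightarrow> (nat \<Rightarrow> real^'d) \<Rightarrow> real" where
  "norm21 T A = (\<Sum>i\<in>UNIV. sqrt (\<Sum>t\<in>{1..T}. (A t $ i)^2))"

definition rademacher_exp :: "'i set \<Rightarrow> (('i \<Rightarrow> real) \<Rightarrow> real) \<Rightarrow> real" where
  "rademacher_exp I F = (\<Sum>\<sigma>\<in>PiE I (\<lambda>_. {-1, 1}). F \<sigma>) / 2 ^ card I"

definition sample_S :: "nat \<Rightarrow> (nat \<Rightarrow> real^'d) \<Rightarrow> real" where
  "sample_S mt xs = (\<Sum>i\<in>{1..mt}. (norm (xs i))^2) / real mt"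

end

theory Submission
  imports Defs
begin

text \<open>The Ledoux--Talagrand contraction inequality (proved one sample at a time, by pairing each
  sign vector with its flip in that coordinate) replaces the \<open>c\<close>-Lipschitz loss by \<open>c\<close> times the
  linear predictor. For fixed signs put \<open>w\<^sub>t = \<Sum>\<^sub>i \<sigma>\<^sub>t\<^sub>i x\<^sub>t\<^sub>i\<close>; as \<open>U\<^sup>T\<close> preserves norms, the
  task-specific part \<open>\<Sum>\<^sub>t a\<^sub>t \<bullet> U\<^sup>T w\<^sub>t\<close> is at most \<open>\<parallel>A\<parallel>\<^sub>2\<^sub>,\<^sub>1 (\<Sum>\<^sub>t \<parallel>w\<^sub>t\<parallel>\<^sup>2)\<^sup>1\<^sup>/\<^sup>2\<close> by Cauchy--Schwarz
  and the shared part \<open>a\<^sub>0 \<bullet> U\<^sup>T \<Sum>\<^sub>t w\<^sub>t\<close> at most \<open>\<parallel>a\<^sub>0\<parallel> \<parallel>\<Sum>\<^sub>t w\<^sub>t\<parallel>\<close>. Jensen's inequality together with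
  \<open>E \<parallel>\<Sum>\<^sub>j \<sigma>\<^sub>j X\<^sub>j\<parallel>\<^sup>2 = \<Sum>\<^sub>j \<parallel>X\<^sub>j\<parallel>\<^sup>2\<close> bounds the expectation of both norms by \<open>(\<Sum>\<^sub>t m\<^sub>t S(X\<^sub>t))\<^sup>1\<^sup>/\<^sup>2\<close>.\<close>

abbreviation rademacher_signs :: "'i set \<Rightarrow> ('i \<Rightarrow> real) set" where
  "rademacher_signs I \<equiv> PiE I (\<lambda>_. {-1, 1})"

lemma card_rademacher_signs: "finite I \<Longrightarrow> card (rademacher_signs I) = 2 ^ card I"
  by (simp add: card_PiE numeral_2_eq_2)

lemma sum_rademacher_signs_flip:
  assumes "k \<in> I"
  shows "(\<Sum>\<sigma>\<in>rademacher_signs I. F (\<sigma>(k := - \<sigma> k))) = (\<Sum>\<sigma>\<in>rademacher_signs I. F \<sigma>)"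
  by (rule sum.reindex_bij_witness[where i="\<lambda>\<sigma>. \<sigma>(k := - \<sigma> k)" and j="\<lambda>\<sigma>. \<sigma>(k := - \<sigma> k)"])
    (use assms in \<open>auto simp: PiE_iff extensional_def\<close>)

lemma rademacher_exp_mono:
  assumes "\<And>\<sigma>. \<sigma> \<in> rademacher_signs I \<Longrightarrow> F \<sigma> \<le> G \<sigma>"
  shows "rademacher_exp I F \<le> rademacher_exp I G"
  unfolding rademacher_exp_def by (rule divide_right_mono) (auto intro!: sum_mono assms)

lemma rademacher_exp_linear:
  "rademacher_exp I (\<lambda>\<sigma>. a * F \<sigma> + b * G \<sigma>) = a * rademacher_exp I F + b * rademacher_exp I G"
  unfolding rademacher_exp_def by (simp add: sum.distrib sum_distrib_left add_divide_distrib)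

lemma rademacher_exp_sum:
  "rademacher_exp I (\<lambda>\<sigma>. \<Sum>t\<in>S. F t \<sigma>) = (\<Sum>t\<in>S. rademacher_exp I (F t))"
  unfolding rademacher_exp_def by (simp add: sum.swap[of _ S] sum_divide_distrib)

lemma rademacher_exp_le_by_flip_pairs:
  assumes k: "k \<in> I"
    and pairs: "\<And>\<sigma>. \<sigma> \<in> rademacher_signs I \<Longrightarrow>
      F \<sigma> + F (\<sigma>(k := - \<sigma> k)) \<le> G \<sigma> + G (\<sigma>(k := - \<sigma> k))"
  shows "rademacher_exp I F \<le> rademacher_exp I G"
proof -
  have "2 * (\<Sum>\<sigma>\<in>rademacher_signs I. F \<sigma>) = (\<Sum>\<sigma>\<in>rademacher_signs I. F \<sigma> + F (\<sigma>(k := - \<sigma> k)))"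
    by (simp add: sum.distrib sum_rademacher_signs_flip[OF k])
  also have "\<dots> \<le> (\<Sum>\<sigma>\<in>rademacher_signs I. G \<sigma> + G (\<sigma>(k := - \<sigma> k)))"
    by (rule sum_mono) (rule pairs)
  also have "\<dots> = 2 * (\<Sum>\<sigma>\<in>rademacher_signs I. G \<sigma>)"
    by (simp add: sum.distrib sum_rademacher_signs_flip[OF k])
  finally show ?thesis
    unfolding rademacher_exp_def by (intro divide_right_mono) simp_all
qed

lemma sum_rademacher_signs_mult:
  assumes fin: "finite I" and a: "a \<in> I" and b: "b \<in> I"
  shows "(\<Sum>\<sigma>\<in>rademacher_signs I. \<sigma> a * \<sigma> b) = (if a = b then 2 ^ card I else 0)"
proof (cases "a = b")
  case True
  have "(\<Sum>\<sigma>\<in>rademacher_signs I. \<sigma> a * \<sigma> b) = (\<Sum>\<sigma>\<in>rademacher_signs I. 1)"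
    by (rule sum.cong) (use a True in \<open>auto simp: PiE_iff\<close>)
  then show ?thesis using True fin by (simp add: card_rademacher_signs)
next
  case False
  let ?S = "\<Sum>\<sigma>\<in>rademacher_signs I. \<sigma> a * \<sigma> b"
  have "?S = (\<Sum>\<sigma>\<in>rademacher_signs I. (\<sigma>(a := - \<sigma> a)) a * (\<sigma>(a := - \<sigma> a)) b)"
    by (rule sum_rademacher_signs_flip[OF a, symmetric])
  also have "\<dots> = - ?S" using False by (simp add: sum_negf)
  finally show ?thesis using False by simp
qed

lemma rademacher_exp_norm_sum_squared:
  fixes X :: "'i \<Rightarrow> 'v::real_inner"
  assumes fin: "finite I" and J: "J \<subseteq> I"
  shows "rademacher_exp I (\<lambda>\<sigma>. (norm (\<Sum>j\<in>J. \<sigma> j *\<^sub>R X j))\<^sup>2) = (\<Sum>j\<in>J. (norm (X j))\<^sup>2)"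
proof -
  have finJ: "finite J" using fin J finite_subset by blast
  have expand: "(norm (\<Sum>j\<in>J. \<sigma> j *\<^sub>R X j))\<^sup>2 = (\<Sum>a\<in>J. \<Sum>b\<in>J. (X b \<bullet> X a) * (\<sigma> a * \<sigma> b))"
    for \<sigma> :: "'i \<Rightarrow> real"
    by (simp add: power2_norm_eq_inner inner_sum_left inner_sum_right sum_distrib_left algebra_simps)
  have "(\<Sum>\<sigma>\<in>rademacher_signs I. (norm (\<Sum>j\<in>J. \<sigma> j *\<^sub>R X j))\<^sup>2)
      = (\<Sum>a\<in>J. \<Sum>b\<in>J. (X b \<bullet> X a) * (\<Sum>\<sigma>\<in>rademacher_signs I. \<sigma> a * \<sigma> b))"
    unfolding expand by (simp add: sum_distrib_left sum.swap[of _ "rademacher_signs I"])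
  also have "\<dots> = (\<Sum>a\<in>J. \<Sum>b\<in>J. (X b \<bullet> X a) * (if a = b then 2 ^ card I else 0))"
    by (intro sum.cong refl, subst sum_rademacher_signs_mult[OF fin]) (use J in auto)
  also have "\<dots> = (\<Sum>a\<in>J. (norm (X a))\<^sup>2 * 2 ^ card I)"
    by (simp add: finJ if_distrib power2_norm_eq_inner cong: if_cong)
  finally show ?thesis unfolding rademacher_exp_def by (simp add: sum_distrib_right[symmetric])
qed

lemma rademacher_exp_sqrt_le:
  assumes fin: "finite I" and nonneg: "\<And>\<sigma>. Z \<sigma> \<ge> 0"
  shows "rademacher_exp I (\<lambda>\<sigma>. sqrt (Z \<sigma>)) \<le> sqrt (rademacher_exp I Z)"
proof -
  define n :: real where "n = 2 ^ card I"
  have n: "n > 0" unfolding n_def by simp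
  have "(\<Sum>\<sigma>\<in>rademacher_signs I. \<bar>sqrt (Z \<sigma>)\<bar> * \<bar>1\<bar>)
      \<le> L2_set (\<lambda>\<sigma>. sqrt (Z \<sigma>)) (rademacher_signs I) * L2_set (\<lambda>_. 1) (rademacher_signs I)"
    by (rule L2_set_mult_ineq)
  then have "(\<Sum>\<sigma>\<in>rademacher_signs I. sqrt (Z \<sigma>)) \<le> sqrt (\<Sum>\<sigma>\<in>rademacher_signs I. Z \<sigma>) * sqrt n"
    using nonneg fin by (simp add: L2_set_def card_rademacher_signs n_def)
  then have "(\<Sum>\<sigma>\<in>rademacher_signs I. sqrt (Z \<sigma>)) / n \<le> sqrt (\<Sum>\<sigma>\<in>rademacher_signs I. Z \<sigma>) * sqrt n / n"
    using n by (simp add: divide_right_mono)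
  also have "\<dots> = sqrt ((\<Sum>\<sigma>\<in>rademacher_signs I. Z \<sigma>) / n)"
    using n by (simp add: real_sqrt_divide field_simps)
  finally show ?thesis unfolding rademacher_exp_def n_def .
qed

lemma rademacher_exp_norm_sum_le:
  fixes X :: "'i \<Rightarrow> 'v::real_inner"
  assumes "finite I"
  shows "rademacher_exp I (\<lambda>\<sigma>. norm (\<Sum>j\<in>I. \<sigma> j *\<^sub>R X j)) \<le> sqrt (\<Sum>j\<in>I. (norm (X j))\<^sup>2)"
proof -
  have "rademacher_exp I (\<lambda>\<sigma>. norm (\<Sum>j\<in>I. \<sigma> j *\<^sub>R X j))
      = rademacher_exp I (\<lambda>\<sigma>. sqrt ((norm (\<Sum>j\<in>I. \<sigma> j *\<^sub>R X j))\<^sup>2))"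
    by simp
  also have "\<dots> \<le> sqrt (rademacher_exp I (\<lambda>\<sigma>. (norm (\<Sum>j\<in>I. \<sigma> j *\<^sub>R X j))\<^sup>2))"
    by (rule rademacher_exp_sqrt_le[OF assms]) simp
  finally show ?thesis by (simp only: rademacher_exp_norm_sum_squared[OF assms order.refl])
qed

lemma rademacher_exp_block_norms_le:
  fixes X :: "'t \<Rightarrow> 'i \<Rightarrow> 'v::real_inner"
  assumes fin: "finite I" and blocks: "Sigma S R \<subseteq> I"
  shows "rademacher_exp I (\<lambda>\<sigma>. sqrt (\<Sum>t\<in>S. (norm (\<Sum>i\<in>R t. \<sigma> (t, i) *\<^sub>R X t i))\<^sup>2))
    \<le> sqrt (\<Sum>t\<in>S. \<Sum>i\<in>R t. (norm (X t i))\<^sup>2)"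
proof -
  have block: "rademacher_exp I (\<lambda>\<sigma>. (norm (\<Sum>i\<in>R t. \<sigma> (t, i) *\<^sub>R X t i))\<^sup>2) = (\<Sum>i\<in>R t. (norm (X t i))\<^sup>2)"
    if t: "t \<in> S" for t
  proof -
    have sub: "Pair t ` R t \<subseteq> I" using blocks t by auto
    have "rademacher_exp I (\<lambda>\<sigma>. (norm (\<Sum>i\<in>R t. \<sigma> (t, i) *\<^sub>R X t i))\<^sup>2)
        = rademacher_exp I (\<lambda>\<sigma>. (norm (\<Sum>j\<in>Pair t ` R t. \<sigma> j *\<^sub>R case_prod X j))\<^sup>2)"
      by (simp add: sum.reindex inj_on_def)
    also have "\<dots> = (\<Sum>j\<in>Pair t ` R t. (norm (case_prod X j))\<^sup>2)"
      by (rule rademacher_exp_norm_sum_squared[OF fin sub])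
    finally show ?thesis by (simp add: sum.reindex inj_on_def)
  qed
  have "rademacher_exp I (\<lambda>\<sigma>. sqrt (\<Sum>t\<in>S. (norm (\<Sum>i\<in>R t. \<sigma> (t, i) *\<^sub>R X t i))\<^sup>2))
      \<le> sqrt (rademacher_exp I (\<lambda>\<sigma>. \<Sum>t\<in>S. (norm (\<Sum>i\<in>R t. \<sigma> (t, i) *\<^sub>R X t i))\<^sup>2))"
    by (rule rademacher_exp_sqrt_le[OF fin]) (simp add: sum_nonneg)
  also have "\<dots> = sqrt (\<Sum>t\<in>S. \<Sum>i\<in>R t. (norm (X t i))\<^sup>2)"
    by (simp add: rademacher_exp_sum block)
  finally show ?thesis .
qed

lemma SUP_sign_pair_lipschitz_le:
  fixes f g :: "'p \<Rightarrow> real"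
  assumes P: "P \<noteq> {}" and c: "c \<ge> 0"
    and bg: "\<And>p. p \<in> P \<Longrightarrow> \<bar>g p\<bar> \<le> Bg" and bf: "\<And>p. p \<in> P \<Longrightarrow> \<bar>f p\<bar> \<le> Bf"
    and lip: "\<And>u v. \<bar>\<phi> u - \<phi> v\<bar> \<le> c * \<bar>u - v\<bar>"
  shows "(SUP p\<in>P. \<phi> (f p) + g p) + (SUP p\<in>P. - \<phi> (f p) + g p)
     \<le> (SUP p\<in>P. c * f p + g p) + (SUP p\<in>P. - (c * f p) + g p)"
proof -
  define R1 where "R1 = (SUP p\<in>P. c * f p + g p)"
  define R2 where "R2 = (SUP p\<in>P. - (c * f p) + g p)"
  have cf: "\<bar>c * f p\<bar> \<le> c * Bf" if "p \<in> P" for p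
    using mult_left_mono[OF bf[OF that] c] c by (simp add: abs_mult)
  have "bdd_above ((\<lambda>p. c * f p + g p) ` P)"
    by (rule bdd_aboveI2[where M="c * Bf + Bg"]) (use cf bg in fastforce)
  then have R1: "c * f p + g p \<le> R1" if "p \<in> P" for p
    unfolding R1_def using that by (rule cSUP_upper2) simp
  have "bdd_above ((\<lambda>p. - (c * f p) + g p) ` P)"
    by (rule bdd_aboveI2[where M="c * Bf + Bg"]) (use cf bg in fastforce)
  then have R2: "- (c * f p) + g p \<le> R2" if "p \<in> P" for p
    unfolding R2_def using that by (rule cSUP_upper2) simp
  have pair: "(\<phi> (f p) + g p) + (- \<phi> (f q) + g q) \<le> R1 + R2" if "p \<in> P" "q \<in> P" for p q
  proof -
    have "\<phi> (f p) - \<phi> (f q) \<le> c * \<bar>f p - f q\<bar>" using lip[of "f p" "f q"] by linarith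
    also have "\<dots> = \<bar>c * f p - c * f q\<bar>" using c by (simp add: abs_mult flip: right_diff_distrib)
    finally have "\<phi> (f p) - \<phi> (f q) \<le> \<bar>c * f p - c * f q\<bar>" .
    \<comment> \<open>depending on the sign of \<open>f p - f q\<close>, charge \<open>p\<close> to \<open>R1\<close> and \<open>q\<close> to \<open>R2\<close> or the other way round\<close>
    then show ?thesis using R1[OF that(1)] R2[OF that(2)] R1[OF that(2)] R2[OF that(1)] by linarith
  qed
  have "(SUP p\<in>P. \<phi> (f p) + g p) \<le> R1 + R2 - (- \<phi> (f q) + g q)" if "q \<in> P" for q
    using pair[OF _ that] by (intro cSUP_least[OF P]) (simp add: algebra_simps)
  then have "(SUP q\<in>P. - \<phi> (f q) + g q) \<le> R1 + R2 - (SUP p\<in>P. \<phi> (f p) + g p)"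
    by (intro cSUP_least[OF P]) (simp add: algebra_simps)
  then show ?thesis unfolding R1_def R2_def by linarith
qed

lemma rademacher_contraction_coordinate:
  fixes h :: "'i \<Rightarrow> 'p \<Rightarrow> real"
  assumes fin: "finite I" and k: "k \<in> I" and P: "P \<noteq> {}" and c: "c \<ge> 0"
    and bh: "\<And>j p. j \<in> I \<Longrightarrow> p \<in> P \<Longrightarrow> \<bar>h j p\<bar> \<le> B j"
    and bf: "\<And>p. p \<in> P \<Longrightarrow> \<bar>f p\<bar> \<le> Bf"
    and lip: "\<And>u v. \<bar>\<phi> u - \<phi> v\<bar> \<le> c * \<bar>u - v\<bar>"
  shows "rademacher_exp I (\<lambda>\<sigma>. SUP p\<in>P. \<Sum>j\<in>I. \<sigma> j * (h(k := \<lambda>p. \<phi> (f p))) j p)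
       \<le> rademacher_exp I (\<lambda>\<sigma>. SUP p\<in>P. \<Sum>j\<in>I. \<sigma> j * (h(k := \<lambda>p. c * f p)) j p)"
proof (rule rademacher_exp_le_by_flip_pairs[OF k])
  fix \<sigma> assume \<sigma>: "\<sigma> \<in> rademacher_signs I"
  define g where "g = (\<lambda>p. \<Sum>j\<in>I - {k}. \<sigma> j * h j p)"
  have signs: "\<sigma> j = -1 \<or> \<sigma> j = 1" if "j \<in> I" for j using \<sigma> that by (auto simp: PiE_iff)
  have split: "(\<Sum>j\<in>I. \<tau> j * (h(k := H)) j p) = \<tau> k * H p + g p"
    if "\<tau> \<in> {\<sigma>, \<sigma>(k := - \<sigma> k)}" for \<tau> :: "'i \<Rightarrow> real" and H p
  proof -
    have "(\<Sum>j\<in>I - {k}. \<tau> j * (h(k := H)) j p) = g p"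
      unfolding g_def using that by (intro sum.cong) auto
    then show ?thesis using fin k by (simp add: sum.remove)
  qed
  have "\<bar>g p\<bar> \<le> (\<Sum>j\<in>I - {k}. B j)" if "p \<in> P" for p
  proof -
    have "\<bar>\<sigma> j * h j p\<bar> \<le> B j" if "j \<in> I" for j
      using signs[OF that] bh[OF that \<open>p \<in> P\<close>] by (auto simp: abs_mult)
    then show ?thesis unfolding g_def by (intro order.trans[OF sum_abs sum_mono]) simp
  qed
  from SUP_sign_pair_lipschitz_le[OF P c this bf lip]
  have "(SUP p\<in>P. \<sigma> k * \<phi> (f p) + g p) + (SUP p\<in>P. (\<sigma>(k := - \<sigma> k)) k * \<phi> (f p) + g p)
      \<le> (SUP p\<in>P. \<sigma> k * (c * f p) + g p) + (SUP p\<in>P. (\<sigma>(k := - \<sigma> k)) k * (c * f p) + g p)"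
    using signs[OF k] by (auto simp: add.commute)
  then show "(SUP p\<in>P. \<Sum>j\<in>I. \<sigma> j * (h(k := \<lambda>p. \<phi> (f p))) j p)
      + (SUP p\<in>P. \<Sum>j\<in>I. (\<sigma>(k := - \<sigma> k)) j * (h(k := \<lambda>p. \<phi> (f p))) j p)
    \<le> (SUP p\<in>P. \<Sum>j\<in>I. \<sigma> j * (h(k := \<lambda>p. c * f p)) j p)
      + (SUP p\<in>P. \<Sum>j\<in>I. (\<sigma>(k := - \<sigma> k)) j * (h(k := \<lambda>p. c * f p)) j p)"
    unfolding split[OF insertI1] split[OF insertI2[OF singletonI]] .
qed

text \<open>The boundedness hypothesis is what makes the real-valued suprema meaningful:
  \<open>SUP\<close> of a set that is not bounded above is an unspecified value.\<close>

lemma rademacher_contraction: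
  fixes f :: "'i \<Rightarrow> 'p \<Rightarrow> real"
  assumes fin: "finite I" and P: "P \<noteq> {}" and c: "c \<ge> 0"
    and bf: "\<And>j p. j \<in> I \<Longrightarrow> p \<in> P \<Longrightarrow> \<bar>f j p\<bar> \<le> B j"
    and lip: "\<And>j u v. j \<in> I \<Longrightarrow> \<bar>\<phi> j u - \<phi> j v\<bar> \<le> c * \<bar>u - v\<bar>"
  shows "rademacher_exp I (\<lambda>\<sigma>. SUP p\<in>P. \<Sum>j\<in>I. \<sigma> j * \<phi> j (f j p))
       \<le> rademacher_exp I (\<lambda>\<sigma>. SUP p\<in>P. \<Sum>j\<in>I. \<sigma> j * (c * f j p))"
proof -
  define mixed where "mixed J = (\<lambda>j p. if j \<in> J then \<phi> j (f j p) else c * f j p)" for J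
  have "rademacher_exp I (\<lambda>\<sigma>. SUP p\<in>P. \<Sum>j\<in>I. \<sigma> j * mixed J j p)
      \<le> rademacher_exp I (\<lambda>\<sigma>. SUP p\<in>P. \<Sum>j\<in>I. \<sigma> j * (c * f j p))"
    if "finite J" "J \<subseteq> I" for J
    using that
  proof (induction J rule: finite_induct)
    case empty
    then show ?case by (simp add: mixed_def)
  next
    case (insert k J)
    have k: "k \<in> I" using insert.prems by simp
    have "\<bar>mixed J j p\<bar> \<le> \<bar>\<phi> j 0\<bar> + c * B j" if "j \<in> I" "p \<in> P" for j p
      using lip[OF that(1), of "f j p" 0] mult_left_mono[OF bf[OF that] c] c
      by (auto simp: mixed_def abs_mult)
    then have "rademacher_exp I (\<lambda>\<sigma>. SUP p\<in>P. \<Sum>j\<in>I. \<sigma> j * ((mixed J)(k := \<lambda>p. \<phi> k (f k p))) j p)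
        \<le> rademacher_exp I (\<lambda>\<sigma>. SUP p\<in>P. \<Sum>j\<in>I. \<sigma> j * ((mixed J)(k := \<lambda>p. c * f k p)) j p)"
      by (rule rademacher_contraction_coordinate[OF fin k P c _ bf[OF k] lip[OF k]])
    moreover have "(mixed J)(k := \<lambda>p. \<phi> k (f k p)) = mixed (insert k J)"
      and "(mixed J)(k := \<lambda>p. c * f k p) = mixed J"
      using insert.hyps(2) by (auto simp: mixed_def fun_eq_iff)
    ultimately have "rademacher_exp I (\<lambda>\<sigma>. SUP p\<in>P. \<Sum>j\<in>I. \<sigma> j * mixed (insert k J) j p)
        \<le> rademacher_exp I (\<lambda>\<sigma>. SUP p\<in>P. \<Sum>j\<in>I. \<sigma> j * mixed J j p)"
      by simp
    with insert.IH insert.prems show ?case by simp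
  qed
  from this[OF fin order.refl] show ?thesis by (simp add: mixed_def)
qed

lemma admissible_linear_imp_lipschitz:
  assumes "admissible c l {h :: real^'d \<Rightarrow> real. linear h}"
  shows "\<bar>l y u - l y v\<bar> \<le> c * \<bar>u - v\<bar>"
proof -
  \<comment> \<open>the linear maps \<open>z \<mapsto> r (e \<bullet> z)\<close> with \<open>e \<bullet> e = 1\<close> take every value \<open>r\<close> at \<open>e\<close>\<close>
  obtain e :: "real^'d" where e: "e \<in> Basis" using nonempty_Basis by blast
  have lin: "linear (\<lambda>z. r * (e \<bullet> z))" for r
    by (simp add: linear_iff inner_add_right algebra_simps)
  have "\<bar>l y (h e) - l y (h' e)\<bar> \<le> c * \<bar>h e - h' e\<bar>" if "linear h" "linear h'" for h h'
    using assms that unfolding admissible_def by blast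
  from this[OF lin[of u] lin[of v]] show ?thesis using e by simp
qed

lemma norm_transpose_orthogonal_mult:
  fixes U :: "real^'d^'d"
  assumes "transpose U ** U = mat 1"
  shows "norm (transpose U *v v) = norm v"
proof -
  have "orthogonal_matrix U" using assms by (simp add: orthogonal_matrix)
  then have "orthogonal_transformation ((*v) (transpose U))"
    by (simp add: orthogonal_transformation_matrix)
  then show ?thesis by (rule orthogonal_transformation_norm)
qed

lemma norm21_nonneg: "norm21 T A \<ge> 0"
  unfolding norm21_def by (intro sum_nonneg real_sqrt_ge_zero) (simp add: sum_nonneg)

lemma norm_le_norm21:
  assumes "t \<in> {1..T}"
  shows "norm (A t) \<le> norm21 T A"
proof -
  have "norm (A t) \<le> (\<Sum>j\<in>UNIV. \<bar>A t $ j\<bar>)" by (rule norm_le_l1_cart)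
  also have "\<dots> \<le> norm21 T A" unfolding norm21_def
  proof (intro sum_mono)
    fix j
    have "(A t $ j)\<^sup>2 \<le> (\<Sum>t'\<in>{1..T}. (A t' $ j)\<^sup>2)"
      by (rule member_le_sum[where f="\<lambda>t'. (A t' $ j)\<^sup>2"]) (use assms in auto)
    then show "\<bar>A t $ j\<bar> \<le> sqrt (\<Sum>t'\<in>{1..T}. (A t' $ j)\<^sup>2)"
      by (metis real_sqrt_abs real_sqrt_le_mono)
  qed
  finally show ?thesis .
qed

lemma sum_inner_le_norm21:
  "(\<Sum>t\<in>{1..T}. A t \<bullet> z t) \<le> norm21 T A * sqrt (\<Sum>t\<in>{1..T}. (norm (z t))\<^sup>2)"
proof -
  let ?N = "sqrt (\<Sum>t\<in>{1..T}. (norm (z t))\<^sup>2)"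
  have "(\<Sum>t\<in>{1..T}. A t \<bullet> z t) = (\<Sum>j\<in>UNIV. \<Sum>t\<in>{1..T}. A t $ j * z t $ j)"
    by (simp add: inner_vec_def) (rule sum.swap)
  also have "\<dots> \<le> (\<Sum>j\<in>UNIV. \<Sum>t\<in>{1..T}. \<bar>A t $ j\<bar> * \<bar>z t $ j\<bar>)"
    by (intro sum_mono) (simp add: abs_mult[symmetric])
  also have "\<dots> \<le> (\<Sum>j\<in>UNIV. L2_set (\<lambda>t. A t $ j) {1..T} * L2_set (\<lambda>t. z t $ j) {1..T})"
    by (intro sum_mono L2_set_mult_ineq)
  also have "\<dots> \<le> (\<Sum>j\<in>UNIV. L2_set (\<lambda>t. A t $ j) {1..T} * ?N)"
  proof (intro sum_mono mult_left_mono L2_set_nonneg)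
    fix j
    have "(z t $ j)\<^sup>2 \<le> (norm (z t))\<^sup>2" for t
      using power_mono[OF component_le_norm_cart[of "z t" j] abs_ge_zero, of 2] by simp
    then show "L2_set (\<lambda>t. z t $ j) {1..T} \<le> ?N"
      unfolding L2_set_def by (intro real_sqrt_le_mono sum_mono)
  qed
  also have "\<dots> = norm21 T A * ?N" unfolding norm21_def L2_set_def by (simp add: sum_distrib_right)
  finally show ?thesis .
qed

lemma abs_inner_shared_predictor_le:
  fixes U :: "real^'d^'d"
  assumes U: "transpose U ** U = mat 1" and A: "norm21 T A \<le> a" and a0: "norm a0 \<le> b"
    and t: "t \<in> {1..T}"
  shows "\<bar>(A t + a0) \<bullet> (transpose U *v v)\<bar> \<le> (a + b) * norm v"
proof -
  have "\<bar>(A t + a0) \<bullet> (transpose U *v v)\<bar> \<le> norm (A t + a0) * norm v"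
    using Cauchy_Schwarz_ineq2 by (metis norm_transpose_orthogonal_mult[OF U])
  also have "\<dots> \<le> (a + b) * norm v"
    using norm_triangle_ineq[of "A t" a0] norm_le_norm21[OF t, of A] A a0
    by (intro mult_right_mono) auto
  finally show ?thesis .
qed

lemma sum_inner_shared_predictor_le:
  fixes U :: "real^'d^'d"
  assumes U: "transpose U ** U = mat 1" and A: "norm21 T A \<le> a" and a0: "norm a0 \<le> b"
  shows "(\<Sum>t\<in>{1..T}. (A t + a0) \<bullet> (transpose U *v w t))
    \<le> a * sqrt (\<Sum>t\<in>{1..T}. (norm (w t))\<^sup>2) + b * norm (\<Sum>t\<in>{1..T}. w t)"
proof -
  have lin: "linear ((*v) (transpose U))" by simp
  have "(\<Sum>t\<in>{1..T}. A t \<bullet> (transpose U *v w t))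
      \<le> norm21 T A * sqrt (\<Sum>t\<in>{1..T}. (norm (transpose U *v w t))\<^sup>2)"
    by (rule sum_inner_le_norm21)
  also have "\<dots> = norm21 T A * sqrt (\<Sum>t\<in>{1..T}. (norm (w t))\<^sup>2)"
    by (simp only: norm_transpose_orthogonal_mult[OF U])
  also have "\<dots> \<le> a * sqrt (\<Sum>t\<in>{1..T}. (norm (w t))\<^sup>2)"
    by (rule mult_right_mono[OF A]) (simp add: sum_nonneg)
  finally have rows: "(\<Sum>t\<in>{1..T}. A t \<bullet> (transpose U *v w t)) \<le> a * sqrt (\<Sum>t\<in>{1..T}. (norm (w t))\<^sup>2)" .
  have "a0 \<bullet> (transpose U *v (\<Sum>t\<in>{1..T}. w t)) \<le> norm a0 * norm (\<Sum>t\<in>{1..T}. w t)"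
    using norm_cauchy_schwarz by (metis norm_transpose_orthogonal_mult[OF U])
  also have "\<dots> \<le> b * norm (\<Sum>t\<in>{1..T}. w t)" by (intro mult_right_mono a0) simp
  finally have shared: "a0 \<bullet> (transpose U *v (\<Sum>t\<in>{1..T}. w t)) \<le> b * norm (\<Sum>t\<in>{1..T}. w t)" .
  have "(\<Sum>t\<in>{1..T}. (A t + a0) \<bullet> (transpose U *v w t))
      = (\<Sum>t\<in>{1..T}. A t \<bullet> (transpose U *v w t)) + a0 \<bullet> (transpose U *v (\<Sum>t\<in>{1..T}. w t))"
    by (simp add: inner_add_left sum.distrib linear_sum[OF lin] inner_sum_right del: transpose_matrix_vector)
  with rows shared show ?thesis by linarith
qed

lemma rademacher_exp_SUP_linear_predictors_le:
  fixes x :: "nat \<Rightarrow> nat \<Rightarrow> real^'d"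
    and P :: "((nat \<Rightarrow> real^'d) \<times> (real^'d) \<times> (real^'d^'d)) set"
  assumes P: "P \<noteq> {}" and c: "c \<ge> 0"
    and P_sub: "\<And>A a0 U. (A, a0, U) \<in> P \<Longrightarrow>
      transpose U ** U = mat 1 \<and> norm21 T A \<le> a \<and> norm a0 \<le> b"
  shows "rademacher_exp {(t, i). t \<in> {1..T} \<and> i \<in> {1..m t}}
      (\<lambda>\<sigma>. SUP (A, a0, U)\<in>P. \<Sum>t\<in>{1..T}. \<Sum>i\<in>{1..m t}.
         \<sigma> (t, i) * (c * ((A t + a0) \<bullet> (transpose U *v x t i))))
    \<le> c * (a + b) * sqrt (\<Sum>t\<in>{1..T}. \<Sum>i\<in>{1..m t}. (norm (x t i))\<^sup>2)"
proof -
  define I where "I = {(t, i). t \<in> {1..T} \<and> i \<in> {1..m t}}"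
  have I: "I = Sigma {1..T} (\<lambda>t. {1..m t})" unfolding I_def by auto
  have fin: "finite I" unfolding I by simp
  define Q where "Q = (\<Sum>t\<in>{1..T}. \<Sum>i\<in>{1..m t}. (norm (x t i))\<^sup>2)"
  define w where "w \<sigma> t = (\<Sum>i\<in>{1..m t}. \<sigma> (t, i) *\<^sub>R x t i)" for \<sigma> :: "nat \<times> nat \<Rightarrow> real" and t
  obtain A a0 U where "(A, a0, U) \<in> P" using P by auto
  then have a: "a \<ge> 0" and b: "b \<ge> 0"
    using P_sub norm21_nonneg[of T A] norm_ge_zero[of a0] by (meson order.trans)+
  have pointwise: "(SUP (A, a0, U)\<in>P. \<Sum>t\<in>{1..T}. \<Sum>i\<in>{1..m t}.
         \<sigma> (t, i) * (c * ((A t + a0) \<bullet> (transpose U *v x t i))))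
    \<le> c * (a * sqrt (\<Sum>t\<in>{1..T}. (norm (w \<sigma> t))\<^sup>2) + b * norm (\<Sum>t\<in>{1..T}. w \<sigma> t))" for \<sigma>
  proof (rule cSUP_least[OF P], clarify)
    fix A a0 U assume "(A, a0, U) \<in> P"
    note bounds = P_sub[OF this]
    have lin: "linear ((*v) (transpose U))" by simp
    have "(\<Sum>t\<in>{1..T}. \<Sum>i\<in>{1..m t}. \<sigma> (t, i) * (c * ((A t + a0) \<bullet> (transpose U *v x t i))))
        = c * (\<Sum>t\<in>{1..T}. (A t + a0) \<bullet> (transpose U *v w \<sigma> t))"
      by (simp add: w_def linear_sum[OF lin] linear_scale[OF lin] inner_sum_right sum_distrib_left
          algebra_simps del: transpose_matrix_vector)
    also have "\<dots> \<le> c * (a * sqrt (\<Sum>t\<in>{1..T}. (norm (w \<sigma> t))\<^sup>2) + b * norm (\<Sum>t\<in>{1..T}. w \<sigma> t))"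
      using bounds by (intro mult_left_mono[OF sum_inner_shared_predictor_le c]) auto
    finally show "(\<Sum>t\<in>{1..T}. \<Sum>i\<in>{1..m t}. \<sigma> (t, i) * (c * ((A t + a0) \<bullet> (transpose U *v x t i))))
        \<le> c * (a * sqrt (\<Sum>t\<in>{1..T}. (norm (w \<sigma> t))\<^sup>2) + b * norm (\<Sum>t\<in>{1..T}. w \<sigma> t))" .
  qed
  have tasks: "rademacher_exp I (\<lambda>\<sigma>. sqrt (\<Sum>t\<in>{1..T}. (norm (w \<sigma> t))\<^sup>2)) \<le> sqrt Q"
    unfolding w_def Q_def by (rule rademacher_exp_block_norms_le[OF fin]) (simp add: I)
  have "rademacher_exp I (\<lambda>\<sigma>. norm (\<Sum>j\<in>I. \<sigma> j *\<^sub>R x (fst j) (snd j)))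
      \<le> sqrt (\<Sum>j\<in>I. (norm (x (fst j) (snd j)))\<^sup>2)"
    by (rule rademacher_exp_norm_sum_le[OF fin])
  then have shared: "rademacher_exp I (\<lambda>\<sigma>. norm (\<Sum>t\<in>{1..T}. w \<sigma> t)) \<le> sqrt Q"
    unfolding w_def Q_def I by (simp add: sum.Sigma split_beta)
  have "rademacher_exp I (\<lambda>\<sigma>. SUP (A, a0, U)\<in>P. \<Sum>t\<in>{1..T}. \<Sum>i\<in>{1..m t}.
         \<sigma> (t, i) * (c * ((A t + a0) \<bullet> (transpose U *v x t i))))
    \<le> rademacher_exp I (\<lambda>\<sigma>. (c * a) * sqrt (\<Sum>t\<in>{1..T}. (norm (w \<sigma> t))\<^sup>2) + (c * b) * norm (\<Sum>t\<in>{1..T}. w \<sigma> t))"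
    using pointwise by (intro rademacher_exp_mono) (simp add: algebra_simps)
  also have "\<dots> \<le> (c * a) * sqrt Q + (c * b) * sqrt Q"
    unfolding rademacher_exp_linear using tasks shared a b c
    by (intro add_mono mult_left_mono) auto
  finally show ?thesis unfolding I_def Q_def by (simp add: algebra_simps)
qed

lemma real_mult_sample_S: "real m * sample_S m xs = (\<Sum>i\<in>{1..m}. (norm (xs i))\<^sup>2)"
  unfolding sample_S_def by (cases "m = 0") simp_all

theorem lemma2:
  fixes T :: nat and m :: "nat \<Rightarrow> nat"
    and x :: "nat \<Rightarrow> nat \<Rightarrow> real^'d" and y :: "nat \<Rightarrow> nat \<Rightarrow> real"
    and \<gamma> \<beta> c :: real and l :: "real \<Rightarrow> real \<Rightarrow> real"
  assumes "T \<ge> 1" and "\<gamma> > 0" and "\<beta> > 0"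
    and "admissible c l {h :: real^'d \<Rightarrow> real. linear h}"
  shows "2 * rademacher_exp {(t, i). t \<in> {1..T} \<and> i \<in> {1..m t}}
      (\<lambda>\<sigma>. SUP (A, a0, U) \<in> {(A :: nat \<Rightarrow> real^'d, a0 :: real^'d, U :: real^'d^'d).
               transpose U ** U = mat 1 \<and> (norm21 T A)^2 \<le> real T / \<gamma> \<and> (norm a0)^2 \<le> 1 / \<beta>}.
            (\<Sum>t\<in>{1..T}. \<Sum>i\<in>{1..m t}. \<sigma> (t, i) * l (y t i) ((A t + a0) \<bullet> (transpose U *v x t i))))
    \<le> 2 * c * (sqrt (real T / \<gamma>) + sqrt (1 / \<beta>)) *
       sqrt (\<Sum>t\<in>{1..T}. real (m t) * sample_S (m t) (x t))"
proof -
  let ?P = "{(A :: nat \<Rightarrow> real^'d, a0 :: real^'d, U :: real^'d^'d).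
    transpose U ** U = mat 1 \<and> (norm21 T A)^2 \<le> real T / \<gamma> \<and> (norm a0)^2 \<le> 1 / \<beta>}"
  define I where "I = {(t, i). t \<in> {1..T} \<and> i \<in> {1..m t}}"
  have I: "I = Sigma {1..T} (\<lambda>t. {1..m t})" unfolding I_def by auto
  define f where "f j = (\<lambda>(A, a0, U :: real^'d^'d). (A (fst j) + a0) \<bullet> (transpose U *v x (fst j) (snd j)))"
    for j :: "nat \<times> nat"
  have c: "c \<ge> 0" using assms(4) unfolding admissible_def by simp
  have P: "transpose U ** U = mat 1 \<and> norm21 T A \<le> sqrt (real T / \<gamma>) \<and> norm a0 \<le> sqrt (1 / \<beta>)"
    if "(A, a0, U) \<in> ?P" for A a0 U
    using that by (auto intro: real_le_rsqrt)
  have "(\<lambda>_. 0, 0, mat 1) \<in> ?P" using assms(2,3) by (simp add: norm21_def transpose_mat)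
  then have "?P \<noteq> {}" by blast
  have "rademacher_exp I (\<lambda>\<sigma>. SUP (A, a0, U)\<in>?P.
      \<Sum>t\<in>{1..T}. \<Sum>i\<in>{1..m t}. \<sigma> (t, i) * l (y t i) ((A t + a0) \<bullet> (transpose U *v x t i)))
    = rademacher_exp I (\<lambda>\<sigma>. SUP p\<in>?P. \<Sum>j\<in>I. \<sigma> j * l (y (fst j) (snd j)) (f j p))"
    unfolding I f_def by (simp add: sum.Sigma split_beta)
  also have "\<dots> \<le> rademacher_exp I (\<lambda>\<sigma>. SUP p\<in>?P. \<Sum>j\<in>I. \<sigma> j * (c * f j p))"
  proof (rule rademacher_contraction[OF _ \<open>?P \<noteq> {}\<close> c])
    show "finite I" unfolding I by simp
    show "\<bar>f j p\<bar> \<le> (sqrt (real T / \<gamma>) + sqrt (1 / \<beta>)) * norm (x (fst j) (snd j))"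
      if j: "j \<in> I" and p: "p \<in> ?P" for j p
    proof -
      obtain A a0 U where p_eq: "p = (A, a0, U)" by (cases p)
      have "fst j \<in> {1..T}" using j unfolding I by auto
      then show ?thesis
        using P[of A a0 U] p unfolding f_def p_eq prod.case
        by (intro abs_inner_shared_predictor_le) auto
    qed
  qed (rule admissible_linear_imp_lipschitz[OF assms(4)])
  also have "\<dots> = rademacher_exp I (\<lambda>\<sigma>. SUP (A, a0, U)\<in>?P.
      \<Sum>t\<in>{1..T}. \<Sum>i\<in>{1..m t}. \<sigma> (t, i) * (c * ((A t + a0) \<bullet> (transpose U *v x t i))))"
    unfolding I f_def by (simp add: sum.Sigma split_beta)
  also have "\<dots> \<le> c * (sqrt (real T / \<gamma>) + sqrt (1 / \<beta>)) *
      sqrt (\<Sum>t\<in>{1..T}. real (m t) * sample_S (m t) (x t))"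
    unfolding I_def real_mult_sample_S
    by (rule rademacher_exp_SUP_linear_predictors_le[OF \<open>?P \<noteq> {}\<close> c P])
  finally show ?thesis unfolding I_def by simp
qed

end
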